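(* Let $p$ be a prime, $r\ge1$, $q=p^r$, and $G=(\mathbb{Z}/q\mathbb{Z})^*$. Let $h:G\to\mathbb{R}$ be an even function (i.e. $h(-b)=h(b)$ for all $b\in G$) that is monotonic on $[1,q/2]_\mathbb{Z}=\{i\in\mathbb{Z}:1\le i\le q/2,\ \gcd(i,p)=1\}$ (viewed as a subset of $G$ via reduction mod $q$). If there is $a\in G$ with $a\neq\pm1$ such that $h(ab)=h(b)$ for all $b\in G$, then $h$ is constant. *)

theory Defs
  imports Complex_Main "HOL-Computational_Algebra.Primes"
begin

text \<open>The unit group (Z/qZ)^* represented by the canonical residues 0..q-1 coprime to q.
  Group operations are integer operations followed by reduction mod q.\<close>
definition units_mod :: "int \<Rightarrow> int set" where
  "units_mod q = {b. 0 \<le> b \<and> b < q \<and> coprime b q}"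

end

theory Submission
  imports Defs
begin

text \<open>
  Write \<open>\<bar>x\<bar>\<^sub>q\<close> (\<open>abs_mod q x\<close>) for the distance from \<open>x\<close> to the nearest multiple of \<open>q\<close>.
  Evenness lets \<open>h\<close> factor through \<open>\<bar>\<cdot>\<bar>\<^sub>q\<close>, and monotonicity on the half range then makes
  the level set \<open>{b. h b = h 1}\<close> a ball \<open>{b. \<bar>b\<bar>\<^sub>q \<le> t}\<close>, which is proper if \<open>h\<close> is not
  constant. This ball is invariant under multiplication by \<open>a\<close>, equivalently by
  \<open>e = \<bar>a\<bar>\<^sub>q\<close>, where \<open>2 \<le> e \<le> q/2\<close> because \<open>a \<noteq> \<plusminus>1\<close>.

  Invariance gives \<open>e \<le> t\<close>. If \<open>q > 2t + 2e\<close>, then stepping down from \<open>n\<close> to \<open>n - 1\<close> or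
  \<open>n - 2\<close> (one of them is prime to \<open>p\<close>) shows \<open>e n \<le> t\<close> for every unit \<open>n \<le> t\<close>, because
  \<open>e n \<le> t + 2e < q - t\<close> cannot wrap around; \<open>n = t\<close> is absurd. So \<open>q \<le> 2t + 2e\<close>, and
  then a unit \<open>m\<close> just below \<open>q/2\<close> (namely \<open>q/2 - 1\<close> for \<open>p = 2\<close>, and \<open>(q - 1)/2\<close> or one
  of its two predecessors for odd \<open>p\<close>) lies outside the ball while \<open>e m\<close> is congruent to a
  number of absolute value at most \<open>t\<close>.
\<close>

definition abs_mod :: "int \<Rightarrow> int \<Rightarrow> int" where
  "abs_mod q x = min (x mod q) (q - x mod q)"

lemma abs_mod_add_mult: "abs_mod q (x + k * q) = abs_mod q x"
  by (simp add: abs_mod_def)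

lemma abs_mod_mod: "abs_mod q (x mod q) = abs_mod q x"
  by (simp add: abs_mod_def)

lemma abs_mod_uminus: "abs_mod q (- x) = abs_mod q x"
  by (simp add: abs_mod_def zmod_zminus1_eq_if min.commute)

lemma abs_mod_le_abs:
  assumes "q > 0"
  shows "abs_mod q x \<le> \<bar>x\<bar>"
proof -
  have "abs_mod q y \<le> y" if "y \<ge> 0" for y
    using that assms zmod_le_nonneg_dividend[of y q] by (simp add: abs_mod_def)
  from this[of x] this[of "- x"] show ?thesis
    by (cases "x \<ge> 0") (simp_all add: abs_mod_uminus)
qed

lemma abs_mod_eq_min: "0 \<le> x \<Longrightarrow> x < q \<Longrightarrow> abs_mod q x = min x (q - x)"
  by (simp add: abs_mod_def)

lemma abs_mod_eq_self: "0 \<le> x \<Longrightarrow> 2 * x \<le> q \<Longrightarrow> abs_mod q x = x"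
  by (cases "x = 0") (simp_all add: abs_mod_def)

lemma abs_mod_mult_abs_mod: "abs_mod q (abs_mod q a * x) = abs_mod q (a * x)"
proof -
  have reduced: "abs_mod q (a mod q * x) = abs_mod q (a * x)"
    by (metis abs_mod_mod mod_mult_left_eq)
  have "abs_mod q ((q - a mod q) * x) = abs_mod q (- (a mod q * x) + x * q)"
    by (simp add: algebra_simps)
  also have "\<dots> = abs_mod q (a * x)"
    by (simp only: abs_mod_add_mult abs_mod_uminus reduced)
  finally show ?thesis
    using reduced by (simp add: abs_mod_def[of q a] min_def)
qed

lemma abs_mod_unit:
  assumes "q \<ge> 2" and "b \<in> units_mod q"
  shows "1 \<le> abs_mod q b" and "2 * abs_mod q b \<le> q" and "coprime (abs_mod q b) q"
proof -
  have b: "0 \<le> b" "b < q" "coprime b q"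
    using assms(2) by (auto simp: units_mod_def)
  have "b \<noteq> 0"
    using b(3) assms(1) by auto
  have "coprime (q - b) q"
    using b(3) by (meson coprimeI coprime_common_divisor dvd_diff_right_iff)
  then show "1 \<le> abs_mod q b" "2 * abs_mod q b \<le> q" "coprime (abs_mod q b) q"
    using b \<open>b \<noteq> 0\<close> by (auto simp: abs_mod_eq_min min_def)
qed

lemma even_on_units_abs_mod:
  assumes "\<forall>b \<in> units_mod q. h ((- b) mod q) = h b" and "b \<in> units_mod q"
  shows "h (abs_mod q b) = h b"
proof -
  have b: "0 \<le> b" "b < q"
    using assms(2) by (auto simp: units_mod_def)
  show ?thesis
  proof (cases "b = 0 \<or> 2 * b \<le> q")
    case True
    then show ?thesis
      using b by (auto simp: abs_mod_eq_min)
  next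
    case False
    then have "abs_mod q b = (- b) mod q"
      using b by (simp add: abs_mod_eq_min zmod_zminus1_eq_if)
    then show ?thesis
      using assms by simp
  qed
qed

lemma level_set_of_one_eq_abs_mod_ball:
  fixes h :: "int \<Rightarrow> 'b::linorder"
  assumes q: "q \<ge> 2"
    and even: "\<forall>b \<in> units_mod q. h ((- b) mod q) = h b"
    and mono: "monotone_on {i. 1 \<le> i \<and> 2 * i \<le> q \<and> coprime i q} (\<le>) (\<le>) h"
  obtains t where "1 \<le> t" "2 * t \<le> q" "coprime t q"
    "\<And>b. b \<in> units_mod q \<Longrightarrow> h b = h 1 \<longleftrightarrow> abs_mod q b \<le> t"
proof -
  define S where "S = {i. 1 \<le> i \<and> 2 * i \<le> q \<and> coprime i q}"
  define A where "A = {x \<in> S. h x = h 1}"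
  have "finite A"
    unfolding A_def S_def by (rule finite_subset[of _ "{0..q}"]) auto
  moreover have "1 \<in> S"
    using q by (simp add: S_def)
  then have "1 \<in> A"
    by (simp add: A_def)
  ultimately have tA: "Max A \<in> A" and tmax: "\<And>x. x \<in> A \<Longrightarrow> x \<le> Max A"
    by (auto intro: Max_in)
  show ?thesis
  proof (rule that)
    show "1 \<le> Max A" "2 * Max A \<le> q" "coprime (Max A) q"
      using tA by (auto simp: A_def S_def)
    fix b
    assume b: "b \<in> units_mod q"
    have bS: "abs_mod q b \<in> S" and hb: "h (abs_mod q b) = h b"
      using abs_mod_unit[OF q b] even_on_units_abs_mod[OF even b] by (auto simp: S_def)
    show "h b = h 1 \<longleftrightarrow> abs_mod q b \<le> Max A"
    proof
      assume "h b = h 1"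
      then show "abs_mod q b \<le> Max A"
        using bS hb by (intro tmax) (simp add: A_def)
    next
      assume le: "abs_mod q b \<le> Max A"
      have "h 1 \<le> h (abs_mod q b)"
        using monotone_onD[OF mono[folded S_def] \<open>1 \<in> S\<close> bS] bS by (simp add: S_def)
      moreover have "h (abs_mod q b) \<le> h (Max A)"
        using monotone_onD[OF mono[folded S_def] bS _ le] tA by (simp add: A_def)
      ultimately show "h b = h 1"
        using tA hb by (simp add: A_def)
    qed
  qed
qed

lemma prime_coprime_iff_not_dvd:
  fixes p x :: int
  assumes "prime p"
  shows "coprime x p \<longleftrightarrow> \<not> p dvd x"
  using assms by (metis coprime_commute coprime_absorb_left not_prime_unit prime_imp_coprime)

lemma prime_not_dvd_succ:
  fixes p x :: int
  assumes "prime p" and "p dvd x"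
  shows "\<not> p dvd x + 1"
  using assms by (metis dvd_add_right_iff not_prime_unit)

lemma coprime_predecessor_within_two:
  fixes p n :: int
  assumes p: "prime p" and n: "2 \<le> n"
  obtains y where "1 \<le> y" "y < n" "n \<le> y + 2" "coprime y p"
proof (cases "p dvd n - 1")
  case False
  then show ?thesis
    using that[of "n - 1"] n prime_coprime_iff_not_dvd[OF p] by simp
next
  case True
  then have "n - 1 \<noteq> 1"
    using p not_prime_unit by auto
  moreover have "\<not> p dvd n - 2"
    using prime_not_dvd_succ[OF p, of "n - 2"] True by auto
  ultimately show ?thesis
    using that[of "n - 2"] n prime_coprime_iff_not_dvd[OF p] by simp
qed

lemma invariant_ball_scaling_bound:
  fixes p q e t n :: int
  assumes p: "prime p" and e: "0 \<le> e" "e \<le> t" and q: "2 * t + 2 * e < q"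
    and closed: "\<And>x. coprime x p \<Longrightarrow> abs_mod q x \<le> t \<Longrightarrow> abs_mod q (e * x) \<le> t"
    and n: "1 \<le> n" "n \<le> t" "coprime n p"
  shows "e * n \<le> t"
  using n
proof (induction "nat n" arbitrary: n rule: less_induct)
  case less
  show ?case
  proof (cases "n = 1")
    case True
    then show ?thesis
      using e by simp
  next
    case False
    then obtain y where y: "1 \<le> y" "y < n" "n \<le> y + 2" "coprime y p"
      using coprime_predecessor_within_two[OF p, of n] less.prems by auto
    have "e * y \<le> t"
      using less.hyps[of y] y less.prems by auto
    moreover have "e * n \<le> e * (y + 2)"
      using e y by (intro mult_left_mono) auto
    ultimately have upper: "e * n \<le> t + 2 * e"
      by (simp add: algebra_simps)
    have "abs_mod q (e * n) \<le> t"
      using closed[OF less.prems(3)] abs_mod_eq_self[of n q] less.prems q e by auto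
    moreover have "abs_mod q (e * n) = min (e * n) (q - e * n)"
      using upper q e less.prems by (intro abs_mod_eq_min) auto
    ultimately show ?thesis
      using upper q by linarith
  qed
qed

lemma modulus_bound_of_invariant_ball:
  fixes p q e t :: int
  assumes p: "prime p" and e: "2 \<le> e" "e \<le> t" and t: "coprime t p"
    and closed: "\<And>x. coprime x p \<Longrightarrow> abs_mod q x \<le> t \<Longrightarrow> abs_mod q (e * x) \<le> t"
  shows "q \<le> 2 * t + 2 * e"
proof (rule ccontr)
  assume "\<not> q \<le> 2 * t + 2 * e"
  then have "e * t \<le> t"
    using invariant_ball_scaling_bound[OF p _ _ _ closed, of t] e t by auto
  moreover have "2 * t \<le> e * t"
    using e by (intro mult_right_mono) auto
  ultimately show False
    using e by linarith
qed

lemma unit_mapped_into_ball_four_dvd: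
  fixes q e t s :: int
  assumes "4 dvd q" and e: "odd e" "1 \<le> e" "2 * e \<le> q" and bound: "q \<le> 2 * t + 2 * e"
    and s: "t < s" "2 * s \<le> q" "odd s"
  shows "\<exists>m. odd m \<and> t < abs_mod q m \<and> abs_mod q (e * m) \<le> t"
proof -
  obtain K where K: "q = 4 * K"
    using assms(1) by blast
  obtain j where j: "e = 2 * j + 1"
    using e(1) by (blast elim: oddE)
  have reduced: "e * (2 * K - 1) = (2 * K - e) + j * q"
    using j K by (simp add: algebra_simps)
  have "s \<le> 2 * K - 1"
    using s(2,3) K by presburger
  then have "t < abs_mod q (2 * K - 1)"
    using s(1) e K by (simp add: abs_mod_eq_self)
  moreover have "abs_mod q (e * (2 * K - 1)) \<le> t"
    using reduced abs_mod_le_abs[of q "2 * K - e"] e bound K by (simp add: abs_mod_add_mult)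
  ultimately show ?thesis
    by (intro exI[of _ "2 * K - 1"]) simp
qed

lemma unit_mapped_into_ball_odd_multiplier:
  fixes p q e t k M :: int
  assumes p: "prime p" "p dvd q" and q: "q = 2 * M + 1"
    and e: "e = 2 * k + 1" "2 \<le> e" "e \<le> t" "coprime e p"
    and bound: "q \<le> 2 * t + 2 * e" and far: "t < M - k"
  shows "\<exists>m. coprime m p \<and> t < abs_mod q m \<and> abs_mod q (e * m) \<le> t"
proof -
  obtain j where j: "1 \<le> j" "j \<le> 2" "j \<le> k" "coprime (M - j) p"
  proof (cases "k = 1")
    case True
    have "\<not> p dvd M - 1"
    proof
      assume "p dvd M - 1"
      then have "p dvd q - 2 * (M - 1)"
        using p(2) by (meson dvd_diff dvd_mult)
      then have "p dvd 3"
        using q by simp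
      then have "p = 3"
        using p(1) primes_dvd_imp_eq[of p 3] by simp
      then show False
        using e True by simp
    qed
    then show ?thesis
      using that[of 1] True prime_coprime_iff_not_dvd[OF p(1)] by simp
  next
    case False
    obtain y where "1 \<le> y" "y < M" "M \<le> y + 2" "coprime y p"
      using coprime_predecessor_within_two[OF p(1), of M] far e by auto
    then show ?thesis
      using that[of "M - y"] False e by auto
  qed
  have "t < abs_mod q (M - j)"
    using far j q e by (simp add: abs_mod_eq_self)
  moreover have "abs_mod q (e * (M - j)) \<le> t"
  proof -
    have "e * (M - j) = (M - k - e * j) + k * q"
      using e q by (simp add: algebra_simps)
    then have "abs_mod q (e * (M - j)) = abs_mod q (M - k - e * j)"
      by (simp only: abs_mod_add_mult)
    also have "\<dots> \<le> \<bar>M - k - e * j\<bar>"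
      using abs_mod_le_abs far q e by simp
    also have "\<dots> \<le> t"
    proof -
      have "e \<le> e * j" "e * j \<le> e * 2"
        using e(2) j(1,2) by (simp_all add: mult_left_mono)
      then show ?thesis
        using far bound q e(1,3) by linarith
    qed
    finally show ?thesis .
  qed
  ultimately show ?thesis
    using j(4) by blast
qed

lemma unit_mapped_into_ball_odd_modulus:
  fixes p q e t s :: int
  assumes p: "prime p" "p dvd q" and "odd q" and e: "2 \<le> e" "e \<le> t" "coprime e p"
    and bound: "q \<le> 2 * t + 2 * e" and s: "t < s" "2 * s \<le> q"
  shows "\<exists>m. coprime m p \<and> t < abs_mod q m \<and> abs_mod q (e * m) \<le> t"
proof -
  obtain M where q: "q = 2 * M + 1"
    using \<open>odd q\<close> by (blast elim: oddE)
  have "\<not> p dvd M"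
  proof
    assume "p dvd M"
    then have "p dvd q - 2 * M"
      using p(2) by (intro dvd_diff) auto
    then show False
      using p(1) q not_prime_unit by auto
  qed
  then have M: "coprime M p" "t < abs_mod q M"
    using prime_coprime_iff_not_dvd[OF p(1)] s q e by (simp_all add: abs_mod_eq_self)
  show ?thesis
  proof (cases "even e")
    case True
    then obtain k where k: "e = 2 * k"
      by blast
    have "e * M = - k + k * q"
      using k q by (simp add: algebra_simps)
    then have "abs_mod q (e * M) = abs_mod q (- k)"
      by (simp only: abs_mod_add_mult)
    also have "\<dots> \<le> t"
      using abs_mod_le_abs[of q "- k"] e k q s by simp
    finally have "abs_mod q (e * M) \<le> t" .
    then show ?thesis
      using M by blast
  next
    case False
    then obtain k where k: "e = 2 * k + 1"
      by (blast elim: oddE)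
    show ?thesis
    proof (cases "t < M - k")
      case True
      then show ?thesis
        using unit_mapped_into_ball_odd_multiplier[OF p q k e(1-3) bound] by blast
    next
      case False
      have "e * M = (M - k) + k * q"
        using k q by (simp add: algebra_simps)
      then have "abs_mod q (e * M) \<le> t"
        using False abs_mod_le_abs[of q "M - k"] e k q s by (simp add: abs_mod_add_mult)
      then show ?thesis
        using M by blast
    qed
  qed
qed

lemma unit_mapped_into_ball_prime_power:
  fixes p q e t s :: int and r :: nat
  assumes p: "prime p" and q: "q = p ^ r"
    and e: "2 \<le> e" "2 * e \<le> q" "coprime e p" "e \<le> t" and bound: "q \<le> 2 * t + 2 * e"
    and s: "t < s" "2 * s \<le> q" "coprime s p"
  shows "\<exists>m. coprime m p \<and> t < abs_mod q m \<and> abs_mod q (e * m) \<le> t"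
proof -
  have "r \<noteq> 0"
    using q e by (intro notI) simp
  show ?thesis
  proof (cases "p = 2")
    case True
    have "r \<noteq> 1"
      using q e True by (intro notI) simp
    then have "2 ^ 2 dvd q"
      using q True \<open>r \<noteq> 0\<close> le_imp_power_dvd[of 2 r "2::int"] by simp
    then show ?thesis
      using unit_mapped_into_ball_four_dvd[of q e t s] True e bound s by auto
  next
    case False
    then have "odd p"
      using prime_ge_2_int[OF p] by (intro prime_odd_int[OF p]) linarith
    moreover have "p dvd q"
      using q \<open>r \<noteq> 0\<close> by simp
    ultimately show ?thesis
      using unit_mapped_into_ball_odd_modulus[OF p _ _ e(1,4,3) bound s(1,2)] q by simp
  qed
qed

lemma no_proper_invariant_ball:
  fixes p q e t s :: int and r :: nat
  assumes p: "prime p" and q: "q = p ^ r"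
    and e: "2 \<le> e" "2 * e \<le> q" "coprime e p" and t: "1 \<le> t" "coprime t p"
    and closed: "\<And>x. coprime x p \<Longrightarrow> abs_mod q (e * x) \<le> t \<longleftrightarrow> abs_mod q x \<le> t"
    and s: "t < s" "2 * s \<le> q" "coprime s p"
  shows False
proof -
  have "e \<le> t"
    using closed[of 1] e t by (simp add: abs_mod_eq_self)
  moreover have "q \<le> 2 * t + 2 * e"
    using modulus_bound_of_invariant_ball[OF p e(1) \<open>e \<le> t\<close> t(2)] closed by blast
  ultimately obtain m where "coprime m p" "t < abs_mod q m" "abs_mod q (e * m) \<le> t"
    using unit_mapped_into_ball_prime_power[OF p q e] s by blast
  then show False
    using closed[of m] by simp
qed

lemma abs_mod_ball_invariant_abs_mod_multiplier:
  fixes h :: "int \<Rightarrow> 'b"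
  assumes q: "q > 0" and a: "a \<in> units_mod q"
    and inv: "\<forall>b \<in> units_mod q. h ((a * b) mod q) = h b"
    and ball: "\<And>b. b \<in> units_mod q \<Longrightarrow> h b = c \<longleftrightarrow> abs_mod q b \<le> t"
    and x: "coprime x q"
  shows "abs_mod q (abs_mod q a * x) \<le> t \<longleftrightarrow> abs_mod q x \<le> t"
proof -
  have xU: "x mod q \<in> units_mod q"
    using x q by (simp add: units_mod_def)
  then have axU: "(a * (x mod q)) mod q \<in> units_mod q"
    using a q by (simp add: units_mod_def)
  have "abs_mod q (abs_mod q a * x) = abs_mod q ((a * x) mod q)"
    by (simp only: abs_mod_mult_abs_mod abs_mod_mod)
  also have "(a * x) mod q = (a * (x mod q)) mod q"
    by (rule mod_mult_right_eq[symmetric])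
  finally have "abs_mod q (abs_mod q a * x) = abs_mod q ((a * (x mod q)) mod q)" .
  moreover have "h ((a * (x mod q)) mod q) = h (x mod q)"
    using inv xU by blast
  ultimately show ?thesis
    using ball[OF xU] ball[OF axU] by (metis abs_mod_mod)
qed

lemma constant_if_mono_invariant:
  fixes p r :: nat and q a :: int and h :: "int \<Rightarrow> real"
  assumes p: "prime p" and r: "r \<ge> 1" and q: "q = int p ^ r"
    and even: "\<forall>b \<in> units_mod q. h ((- b) mod q) = h b"
    and mono: "monotone_on {i::int. 1 \<le> i \<and> 2 * i \<le> q \<and> coprime i (int p)} (\<le>) (\<le>) h"
    and a: "a \<in> units_mod q" "a \<noteq> 1" "a \<noteq> q - 1"
    and inv: "\<forall>b \<in> units_mod q. h ((a * b) mod q) = h b"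
  shows "\<exists>c. \<forall>b \<in> units_mod q. h b = c"
proof (rule ccontr)
  assume nonconstant: "\<not> ?thesis"
  have "2 \<le> int p"
    using prime_ge_2_nat[OF p] by linarith
  also have "\<dots> \<le> int p ^ r"
    using r prime_gt_0_nat[OF p] by (metis power_increasing power_one_right of_nat_0_less_iff
        int_one_le_iff_zero_less)
  finally have q2: "q \<ge> 2"
    unfolding q .
  have coprime_q: "coprime x q \<longleftrightarrow> coprime x (int p)" for x
    using q r by simp
  have "monotone_on {i. 1 \<le> i \<and> 2 * i \<le> q \<and> coprime i q} (\<le>) (\<le>) h"
    using mono coprime_q by simp
  then obtain t where t: "1 \<le> t" "coprime t q"
    and ball: "\<And>b. b \<in> units_mod q \<Longrightarrow> h b = h 1 \<longleftrightarrow> abs_mod q b \<le> t"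
    using level_set_of_one_eq_abs_mod_ball[OF q2 even] by blast
  define e where "e = abs_mod q a"
  have closed: "abs_mod q (e * x) \<le> t \<longleftrightarrow> abs_mod q x \<le> t" if "coprime x (int p)" for x
    using abs_mod_ball_invariant_abs_mod_multiplier[OF _ a(1) inv ball] that q2 coprime_q
    by (simp add: e_def)
  obtain b where b: "b \<in> units_mod q" "h b \<noteq> h 1"
    using nonconstant by blast
  have "e \<noteq> 1"
    using a by (auto simp: e_def abs_mod_eq_min units_mod_def min_def)
  then have "2 \<le> e" "2 * e \<le> q" "coprime e (int p)"
    using abs_mod_unit[OF q2 a(1)] coprime_q by (auto simp: e_def)
  moreover have "t < abs_mod q b" "2 * abs_mod q b \<le> q" "coprime (abs_mod q b) (int p)"
    using ball[OF b(1)] b(2) abs_mod_unit[OF q2 b(1)] coprime_q by auto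
  ultimately show False
    using no_proper_invariant_ball[OF _ q _ _ _ t(1) _ closed] t(2) p coprime_q by auto
qed

theorem lemma4p1:
  fixes p r :: nat and q a :: int and h :: "int \<Rightarrow> real"
  assumes "prime p" and "r \<ge> 1" and "q = int p ^ r"
    and even: "\<forall>b \<in> units_mod q. h ((- b) mod q) = h b"
    and mono: "monotone_on {i::int. 1 \<le> i \<and> 2 * i \<le> q \<and> coprime i (int p)} (\<le>) (\<le>) h
             \<or> monotone_on {i::int. 1 \<le> i \<and> 2 * i \<le> q \<and> coprime i (int p)} (\<le>) (\<ge>) h"
    and "a \<in> units_mod q" and "a \<noteq> 1" and "a \<noteq> q - 1"
    and inv: "\<forall>b \<in> units_mod q. h ((a * b) mod q) = h b"
  shows "\<exists>c. \<forall>b \<in> units_mod q. h b = c"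
  using mono
proof
  assume "monotone_on {i::int. 1 \<le> i \<and> 2 * i \<le> q \<and> coprime i (int p)} (\<le>) (\<le>) h"
  then show ?thesis
    using constant_if_mono_invariant assms by blast
next
  assume "monotone_on {i::int. 1 \<le> i \<and> 2 * i \<le> q \<and> coprime i (int p)} (\<le>) (\<ge>) h"
  then have "monotone_on {i::int. 1 \<le> i \<and> 2 * i \<le> q \<and> coprime i (int p)} (\<le>) (\<le>) (\<lambda>x. - h x)"
    by (auto simp: monotone_on_def)
  then obtain c where "\<forall>b \<in> units_mod q. - h b = c"
    using constant_if_mono_invariant[of p r q "\<lambda>x. - h x" a] assms by auto
  then show ?thesis
    by (intro exI[of _ "- c"]) auto
qed

end
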